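(* Let $P(x)\in\mathbb{Z}[x]$ have degree $d\ge2$ and at least two distinct complex roots. Let $a,b$ be distinct positive integers. Then the polynomial $a\,P(y)-b\,P(x)\in\mathbb{C}[x,y]$ has no factor in $\mathbb{C}[x,y]$ of degree $1$. *)

theory Defs
  imports Complex_Main "HOL-Computational_Algebra.Polynomial"
begin

text \<open>Bivariate polynomials over a ring are represented as iterated univariate
  polynomials: the outer variable is y, the coefficients are polynomials in x,
  i.e. C[x,y] = C[x][y].\<close>

definition total_degree :: "'a::zero poly poly \<Rightarrow> nat" where
  "total_degree p = (if p = 0 then 0
     else Max {i + degree (coeff p i) | i. coeff p i \<noteq> 0})"

definition poly_in_x :: "'a::zero poly \<Rightarrow> 'a poly poly" where
  "poly_in_x p = [: p :]"

definition poly_in_y :: "'a::zero poly \<Rightarrow> 'a poly poly" where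
  "poly_in_y p = map_poly (\<lambda>c. [: c :]) p"

end

theory Submission
  imports Defs
begin

text \<open>A linear factor of \<open>a P(y) - b P(x)\<close> vanishes on a line.  If the line is vertical,
  \<open>P\<close> is constant; otherwise it is \<open>y = l x + m\<close> and we get \<open>a P(l x + m) = b P(x)\<close>.  Then
  \<open>z \<mapsto> l z + m\<close> maps the finite root set of \<open>P\<close> bijectively onto itself and scales the sum
  of all mutual distances of the roots by \<open>|l|\<close>; with two distinct roots this sum is positive,
  so \<open>|l| = 1\<close>.  Comparing leading coefficients gives \<open>b = a l\<^sup>d\<close>, hence \<open>a = b\<close>.\<close>

definition poly2 :: "'a::comm_semiring_0 poly poly \<Rightarrow> 'a \<Rightarrow> 'a \<Rightarrow> 'a" where
  "poly2 F x y = poly (poly F [:y:]) x"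

lemma poly2_mult: "poly2 (F * G) x y = poly2 F x y * poly2 G x y"
  by (simp add: poly2_def)

lemma poly2_diff: "poly2 (F - G) x y = poly2 F x y - poly2 G x y"
  for F G :: "'a::comm_ring poly poly"
  by (simp add: poly2_def)

lemma poly2_smult_of_nat: "poly2 (smult (of_nat n) F) x y = of_nat n * poly2 F x y"
  for F :: "'a::comm_semiring_1 poly poly"
  by (simp add: poly2_def)

lemma poly2_poly_in_x: "poly2 (poly_in_x p) x y = poly p x"
  by (simp add: poly2_def poly_in_x_def)

lemma poly2_poly_in_y: "poly2 (poly_in_y p) x y = poly p y"
  for p :: "'a::comm_semiring_1 poly"
proof -
  have "poly (map_poly (\<lambda>c. [:c:]) p) [:y:] = [:poly p y:]"
    by (induction p) (auto simp: map_poly_pCons mult.commute)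
  then show ?thesis
    by (simp add: poly2_def poly_in_y_def)
qed

lemma poly2_linear: "poly2 [:[:\<gamma>, \<alpha>:], [:\<beta>:]:] x y = \<gamma> + \<alpha> * x + \<beta> * y"
  for \<alpha> \<beta> \<gamma> :: "'a::comm_semiring_1"
  by (simp add: poly2_def algebra_simps)

lemma finite_total_degree_set: "finite {i + degree (coeff F i) | i. coeff F i \<noteq> 0}"
proof -
  have "finite {i. coeff F i \<noteq> 0}"
    by (rule finite_subset[of _ "{..degree F}"]) (auto intro: le_degree)
  moreover have "{i + degree (coeff F i) | i. coeff F i \<noteq> 0}
      = (\<lambda>i. i + degree (coeff F i)) ` {i. coeff F i \<noteq> 0}"
    by auto
  ultimately show ?thesis
    by simp
qed

lemma total_degree_ge: "coeff F i \<noteq> 0 \<Longrightarrow> i + degree (coeff F i) \<le> total_degree F"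
  using finite_total_degree_set[of F]
  by (auto simp: total_degree_def intro!: Max_ge)

lemma total_degree_attained:
  assumes "F \<noteq> 0"
  shows "\<exists>i. coeff F i \<noteq> 0 \<and> i + degree (coeff F i) = total_degree F"
proof -
  have "coeff F (degree F) \<noteq> 0"
    using assms by simp
  then have "{i + degree (coeff F i) | i. coeff F i \<noteq> 0} \<noteq> {}"
    by blast
  from Max_in[OF finite_total_degree_set this] show ?thesis
    using assms by (auto simp: total_degree_def)
qed

lemma degree_le_1_id: "degree p \<le> 1 \<Longrightarrow> [:coeff p 0, coeff p 1:] = p"
  by (rule poly_eqI) (auto simp: coeff_pCons coeff_eq_0 split: nat.split)

lemma total_degree_eq_1_imp_linear:
  fixes F :: "'a::zero poly poly"
  assumes "total_degree F = 1"
  shows "\<exists>\<alpha> \<beta> \<gamma>. F = [:[:\<gamma>, \<alpha>:], [:\<beta>:]:] \<and> (\<alpha> \<noteq> 0 \<or> \<beta> \<noteq> 0)"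
proof -
  have le: "i + degree (coeff F i) \<le> 1" if "coeff F i \<noteq> 0" for i
    using total_degree_ge[OF that] assms by simp
  have "F \<noteq> 0"
    using assms by (auto simp: total_degree_def)
  then obtain i where i: "coeff F i \<noteq> 0" "i + degree (coeff F i) = 1"
    using total_degree_attained[of F] assms by auto
  have "degree F \<le> 1"
    using le[of "degree F"] \<open>F \<noteq> 0\<close> by simp
  moreover have "degree (coeff F 0) \<le> 1" "degree (coeff F 1) = 0"
    using le[of 0] le[of 1] by (cases "coeff F 0 = 0"; cases "coeff F 1 = 0"; simp)+
  ultimately have F: "F = [:[:coeff (coeff F 0) 0, coeff (coeff F 0) 1:], [:coeff (coeff F 1) 0:]:]"
    by (metis degree_le_1_id degree_0_id)
  have "coeff (coeff F 0) 1 \<noteq> 0 \<or> coeff (coeff F 1) 0 \<noteq> 0"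
  proof (cases i)
    case 0
    with i have "degree (coeff F 0) = 1" by simp
    then show ?thesis by (subst (asm) F) (auto split: if_splits)
  next
    case (Suc j)
    with i have "i = 1" "coeff F 1 \<noteq> 0" by auto
    then show ?thesis by (subst (asm) F) auto
  qed
  with F show ?thesis
    by blast
qed

lemma affine_self_similarity_of_linear_factor:
  fixes Q :: "'a::field_char_0 poly" and a b \<alpha> \<beta> \<gamma> :: 'a
  assumes "\<alpha> \<noteq> 0 \<or> \<beta> \<noteq> 0" and "a \<noteq> 0" and "degree Q > 0"
    and factor: "\<And>x y. a * poly Q y - b * poly Q x = (\<gamma> + \<alpha> * x + \<beta> * y) * h x y"
  shows "\<exists>l m. smult a (pcompose Q [:m, l:]) = smult b Q"
proof (cases "\<beta> = 0")
  case True
  with assms(1) have "\<alpha> \<noteq> 0"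
    by simp
  define x\<^sub>0 where "x\<^sub>0 = - \<gamma> / \<alpha>"
  have "a * poly Q y = b * poly Q x\<^sub>0" for y
    using factor[of y x\<^sub>0] True \<open>\<alpha> \<noteq> 0\<close> by (simp add: x\<^sub>0_def)
  then have "poly Q = poly [:b * poly Q x\<^sub>0 / a:]"
    using \<open>a \<noteq> 0\<close> by (auto simp: field_simps)
  then have "degree Q = 0"
    by (metis poly_eq_poly_eq_iff degree_pCons_0)
  with assms(3) show ?thesis
    by simp
next
  case False
  define l m where "l = - \<alpha> / \<beta>" and "m = - \<gamma> / \<beta>"
  have "a * poly Q (l * x + m) = b * poly Q x" for x
    using factor[of "l * x + m" x] False by (simp add: l_def m_def field_simps)
  then have "poly (smult a (pcompose Q [:m, l:])) = poly (smult b Q)"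
    by (simp add: poly_pcompose fun_eq_iff algebra_simps)
  then show ?thesis
    by (auto simp: poly_eq_poly_eq_iff)
qed

lemma norm_eq_1_if_affine_self_map:
  fixes l m :: "'a::real_normed_field"
  assumes "finite R" and "r \<in> R" "s \<in> R" "r \<noteq> s" and "l \<noteq> 0"
    and "(\<lambda>z. l * z + m) ` R \<subseteq> R"
  shows "norm l = 1"
proof -
  define \<phi> where "\<phi> = (\<lambda>z. l * z + m)"
  have "\<phi> ` R \<subseteq> R"
    using assms(6) unfolding \<phi>_def .
  moreover have "inj_on \<phi> R"
    using \<open>l \<noteq> 0\<close> by (auto simp: inj_on_def \<phi>_def)
  ultimately have bij: "bij_betw \<phi> R R"
    using endo_inj_surj[OF \<open>finite R\<close>] by (simp add: bij_betw_def)
  define D where "D = (\<Sum>u\<in>R. \<Sum>v\<in>R. norm (u - v))"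
  have "D = (\<Sum>u\<in>R. \<Sum>v\<in>R. norm (\<phi> u - v))"
    unfolding D_def by (rule sum.reindex_bij_betw[OF bij, symmetric])
  also have "\<dots> = (\<Sum>u\<in>R. \<Sum>v\<in>R. norm (\<phi> u - \<phi> v))"
    by (intro sum.cong refl sum.reindex_bij_betw[OF bij, symmetric])
  also have "\<dots> = norm l * D"
    by (simp add: D_def \<phi>_def sum_distrib_left flip: norm_mult right_diff_distrib)
  finally have "norm l * D = D" ..
  moreover have "0 < norm (r - s)"
    using \<open>r \<noteq> s\<close> by simp
  then have "0 < D"
  proof (rule order.strict_trans2)
    have "norm (r - s) \<le> (\<Sum>v\<in>R. norm (r - v))"
      using assms(1,3) by (intro member_le_sum) auto
    also have "\<dots> \<le> D"
      unfolding D_def using assms(1,2) by (intro member_le_sum sum_nonneg) auto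
    finally show "norm (r - s) \<le> D" .
  qed
  ultimately show ?thesis
    by simp
qed

lemma norm_eq_if_affine_self_similar:
  fixes Q :: "'a::real_normed_field poly"
  assumes similar: "smult a (pcompose Q [:m, l:]) = smult b Q" and "a \<noteq> 0" and "b \<noteq> 0"
    and "degree Q > 0" and "poly Q r = 0" "poly Q s = 0" "r \<noteq> s"
  shows "norm a = norm b"
proof -
  have "l \<noteq> 0"
  proof
    assume "l = 0"
    then have "degree (smult b Q) = 0"
      by (simp flip: similar add: degree_pcompose)
    with assms(3,4) show False
      by simp
  qed
  have "b * lead_coeff Q = a * lead_coeff (pcompose Q [:m, l:])"
    using arg_cong[OF similar, of lead_coeff] by (simp only: lead_coeff_smult)
  also have "\<dots> = a * lead_coeff Q * l ^ degree Q"
    using \<open>l \<noteq> 0\<close> by (simp add: lead_coeff_comp)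
  finally have b: "b = a * l ^ degree Q"
    using assms(4) by (auto simp: mult.commute mult.left_commute)
  have "(\<lambda>z. l * z + m) ` {z. poly Q z = 0} \<subseteq> {z. poly Q z = 0}"
  proof clarify
    fix z assume "poly Q z = 0"
    then show "poly Q (l * z + m) = 0"
      using arg_cong[OF similar, of "\<lambda>p. poly p z"] \<open>a \<noteq> 0\<close>
      by (simp add: poly_pcompose algebra_simps)
  qed
  moreover have "finite {z. poly Q z = 0}"
    using assms(4) by (intro poly_roots_finite) auto
  ultimately have "norm l = 1"
    using norm_eq_1_if_affine_self_map assms(5-7) \<open>l \<noteq> 0\<close> by blast
  then show ?thesis
    by (simp add: b norm_mult norm_power)
qed

theorem mainTheorem4:
  fixes P :: "int poly" and a b :: nat
  assumes "degree P \<ge> 2"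
    and "card {z::complex. poly (map_poly of_int P) z = 0} \<ge> 2"
    and "a > 0" and "b > 0" and "a \<noteq> b"
  shows "\<not> (\<exists>F :: complex poly poly. total_degree F = 1 \<and>
            F dvd (smult (of_nat a) (poly_in_y (map_poly of_int P))
                   - smult (of_nat b) (poly_in_x (map_poly of_int P))))"
proof
  define Q :: "complex poly" where "Q = map_poly of_int P"
  have "degree Q > 0"
    using assms(1) by (simp add: Q_def degree_map_poly)
  have "finite {z. poly Q z = 0}"
    using \<open>degree Q > 0\<close> by (intro poly_roots_finite) auto
  moreover have "\<not> card {z. poly Q z = 0} \<le> Suc 0"
    using assms(2) by (simp add: Q_def)
  ultimately obtain r s where roots: "poly Q r = 0" "poly Q s = 0" "r \<noteq> s"
    using card_le_Suc0_iff_eq by blast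
  assume "\<exists>F :: complex poly poly. total_degree F = 1 \<and>
            F dvd (smult (of_nat a) (poly_in_y (map_poly of_int P))
                   - smult (of_nat b) (poly_in_x (map_poly of_int P)))"
  then obtain F H where "total_degree F = 1"
    and factor: "smult (of_nat a) (poly_in_y Q) - smult (of_nat b) (poly_in_x Q) = F * H"
    unfolding Q_def by (metis dvdE)
  then obtain \<alpha> \<beta> \<gamma> where F: "F = [:[:\<gamma>, \<alpha>:], [:\<beta>:]:]" and "\<alpha> \<noteq> 0 \<or> \<beta> \<noteq> 0"
    using total_degree_eq_1_imp_linear by blast
  have "of_nat a * poly Q y - of_nat b * poly Q x = (\<gamma> + \<alpha> * x + \<beta> * y) * poly2 H x y" for x y
    using arg_cong[OF factor, of "\<lambda>G. poly2 G x y"]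
    unfolding poly2_mult poly2_diff poly2_smult_of_nat poly2_poly_in_x poly2_poly_in_y
    by (simp add: F poly2_linear)
  then have "\<exists>l m. smult (of_nat a) (pcompose Q [:m, l:]) = smult (of_nat b) Q"
    using \<open>\<alpha> \<noteq> 0 \<or> \<beta> \<noteq> 0\<close> \<open>degree Q > 0\<close> assms(3)
    by (intro affine_self_similarity_of_linear_factor) auto
  then obtain l m where "smult (of_nat a) (pcompose Q [:m, l:]) = smult (of_nat b) Q"
    by blast
  then have "norm (of_nat a :: complex) = norm (of_nat b :: complex)"
    using roots \<open>degree Q > 0\<close> assms(3,4) by (intro norm_eq_if_affine_self_similar) auto
  with assms(5) show False
    by (metis norm_of_nat of_nat_eq_iff)
qed

end
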